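(* Let $G:\mathbb R^2\to\mathbb R^2$ be a linear operator, identified with a real $2\times 2$ matrix. Then $G$ is a grid operator if and only if it is of the form $G=\begin{bmatrix}a+\frac{a'}{\sqrt2}&b+\frac{b'}{\sqrt2}\\ c+\frac{c'}{\sqrt2}&d+\frac{d'}{\sqrt2}\end{bmatrix}$, where $a,b,c,d,a',b',c',d'$ are integers satisfying $a+b+c+d\equiv 0\pmod 2$ and $a'\equiv b'\equiv c'\equiv d'\pmod 2$.
   Context: Let $\omega=e^{i\pi/4}$ and $\mathbb Z[\omega]=\{a_0+a_1\omega+a_2\omega^2+a_3\omega^3 : a_j\in\mathbb Z\}\subseteq\mathbb C$, regarded as a subset of $\mathbb R^2$ via $x+iy\mapsto(x,y)$. A real linear operator $G:\mathbb R^2\to\mathbb R^2$ is a grid operator if $G(\mathbb Z[\omega])\subseteq\mathbb Z[\omega]$. *)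

theory Defs
  imports "HOL-Analysis.Analysis" "HOL-Number_Theory.Cong"
begin

definition omega :: complex where
  "omega = cis (pi / 4)"

definition Zomega :: "complex set" where
  "Zomega = {of_int a0 + of_int a1 * omega + of_int a2 * omega ^ 2 + of_int a3 * omega ^ 3
             | a0 a1 a2 a3 :: int. True}"

definition c2v :: "complex \<Rightarrow> real ^ 2" where
  "c2v z = vector [Re z, Im z]"

definition v2c :: "real ^ 2 \<Rightarrow> complex" where
  "v2c v = Complex (v $ 1) (v $ 2)"

definition grid_operator :: "real ^ 2 ^ 2 \<Rightarrow> bool" where
  "grid_operator G \<longleftrightarrow> (\<forall>z \<in> Zomega. v2c (G *v c2v z) \<in> Zomega)"

end

theory Submission
  imports Defs
begin

text \<open>Since \<open>\<omega> = (1 + \<i>)/\<surd>2\<close>, the points of \<open>\<int>[\<omega>]\<close> are exactly the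
  \<open>(p + q/\<surd>2, r + s/\<surd>2)\<close> with integers \<open>q \<equiv> s (mod 2)\<close>, and by the irrationality of
  \<open>\<surd>2\<close> such coordinates are unique. A grid operator maps \<open>1\<close> and \<open>\<i>\<close> to its columns and
  \<open>\<omega>\<close> to their sum divided by \<open>\<surd>2\<close>; comparing coordinates of these three images gives the
  stated form and congruences. Conversely, for a matrix of that form the image of any point of
  \<open>\<int>[\<omega>]\<close> can be multiplied out, and the congruences are exactly what make the halves
  cancel and the parities of the two \<open>1/\<surd>2\<close>-coefficients agree.\<close>

lemma int_square_eq_twice_square_imp_zero:
  fixes m n :: int
  assumes "m\<^sup>2 = 2 * n\<^sup>2"
  shows "n = 0"
  using assms
proof (induction "nat \<bar>n\<bar>" arbitrary: m n rule: less_induct)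
  case less
  show ?case
  proof (rule ccontr)
    assume "n \<noteq> 0"
    from less.prems have "even (m\<^sup>2)" by simp
    then have "even m" by simp
    then obtain k where k: "m = 2 * k" ..
    with less.prems have "n\<^sup>2 = 2 * k\<^sup>2" by (simp add: power_mult_distrib)
    then have "even (n\<^sup>2)" by simp
    then have "even n" by simp
    then obtain j where j: "n = 2 * j" ..
    with \<open>n\<^sup>2 = 2 * k\<^sup>2\<close> have "k\<^sup>2 = 2 * j\<^sup>2" by (simp add: power_mult_distrib)
    moreover have "nat \<bar>j\<bar> < nat \<bar>n\<bar>" using j \<open>n \<noteq> 0\<close> by auto
    ultimately have "j = 0" using less.hyps by blast
    with j \<open>n \<noteq> 0\<close> show False by simp
  qed
qed

lemma int_add_int_mult_sqrt2_eq_0_iff: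
  fixes m n :: int
  shows "of_int m + of_int n * sqrt 2 = 0 \<longleftrightarrow> m = 0 \<and> n = 0"
proof
  assume eq: "of_int m + of_int n * sqrt 2 = 0"
  then have "of_int m = - of_int n * sqrt 2"
    by (simp add: eq_neg_iff_add_eq_0)
  then have "(of_int m)\<^sup>2 = (of_int n * sqrt 2 :: real)\<^sup>2"
    by simp
  then have "real_of_int (m\<^sup>2) = of_int (2 * n\<^sup>2)"
    by (simp add: power_mult_distrib)
  then have "n = 0"
    by (intro int_square_eq_twice_square_imp_zero) (simp only: of_int_eq_iff)
  with eq show "m = 0 \<and> n = 0" by simp
qed simp

lemma divide_sqrt2: "x / sqrt 2 = x * sqrt 2 / (2 :: real)"
  by (simp add: divide_simps)

lemma half_add_div_sqrt2_eq_iff: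
  fixes u v p q :: int
  shows "of_int u / 2 + of_int v / sqrt 2 = of_int p + of_int q / sqrt 2 \<longleftrightarrow> u = 2 * p \<and> v = q"
proof -
  have double: "2 * (of_int x / 2 + of_int y / sqrt 2) = of_int x + of_int y * (sqrt 2 :: real)"
    for x y :: int
    by (simp add: divide_sqrt2 distrib_left)
  have "of_int u / 2 + of_int v / sqrt 2 = of_int p + of_int q / sqrt 2 \<longleftrightarrow>
      2 * (of_int u / 2 + of_int v / sqrt 2) = 2 * (of_int (2 * p) / 2 + of_int q / (sqrt 2 :: real))"
    by (simp only: mult_cancel_left) simp
  also have "\<dots> \<longleftrightarrow> of_int (u - 2 * p) + of_int (v - q) * sqrt 2 = (0 :: real)"
    unfolding double by (simp add: algebra_simps)
  also have "\<dots> \<longleftrightarrow> u = 2 * p \<and> v = q"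
    by (simp only: int_add_int_mult_sqrt2_eq_0_iff) simp
  finally show ?thesis .
qed

lemma Re_omega: "Re omega = 1 / sqrt 2"
  and Im_omega: "Im omega = 1 / sqrt 2"
  unfolding omega_def by (simp_all add: cos_45 sin_45 real_div_sqrt)

lemma omega_squared: "omega\<^sup>2 = \<i>"
proof -
  have "omega\<^sup>2 = cis (pi / 4 + pi / 4)"
    unfolding omega_def power2_eq_square cis_mult ..
  then show ?thesis by (simp add: complex_eq_iff)
qed

lemma omega_cube: "omega ^ 3 = \<i> * omega"
  using omega_squared by (simp add: power3_eq_cube power2_eq_square)

lemma Zomega_memI:
  "of_int a0 + of_int a1 * omega + of_int a2 * omega\<^sup>2 + of_int a3 * omega ^ 3 \<in> Zomega"
  unfolding Zomega_def by blast

lemma Zomega_iff: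
  "z \<in> Zomega \<longleftrightarrow>
    (\<exists>p q r s :: int. Re z = of_int p + of_int q / sqrt 2 \<and> Im z = of_int r + of_int s / sqrt 2 \<and>
      [q = s] (mod 2))" (is "_ \<longleftrightarrow> ?coords")
proof
  assume "z \<in> Zomega"
  then obtain a0 a1 a2 a3 :: int
    where z: "z = of_int a0 + of_int a1 * omega + of_int a2 * omega\<^sup>2 + of_int a3 * omega ^ 3"
    unfolding Zomega_def by blast
  have "Re z = of_int a0 + of_int (a1 - a3) / sqrt 2" "Im z = of_int a2 + of_int (a1 + a3) / sqrt 2"
    unfolding z omega_squared omega_cube
    by (simp_all add: Re_omega Im_omega diff_divide_distrib add_divide_distrib)
  moreover have "[a1 - a3 = a1 + a3] (mod 2)"
    unfolding cong_iff_dvd_diff by simp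
  ultimately show ?coords
    by blast
next
  assume ?coords
  then obtain p q r s :: int where Re_z: "Re z = of_int p + of_int q / sqrt 2"
    and Im_z: "Im z = of_int r + of_int s / sqrt 2"
    and "[q = s] (mod 2)" by blast
  then have "even (q + s)"
    by (simp add: cong_iff_dvd_diff)
  then obtain t where "q + s = 2 * t" ..
  then have q: "q = t - (s - t)" by simp
  have "z = of_int p + of_int t * omega + of_int r * omega\<^sup>2 + of_int (s - t) * omega ^ 3"
    using Re_z Im_z unfolding q omega_squared omega_cube
    by (simp add: complex_eq_iff Re_omega Im_omega diff_divide_distrib)
  then show "z \<in> Zomega"
    by (simp only: Zomega_memI)
qed

lemma one_in_Zomega: "1 \<in> Zomega"
  using Zomega_memI[of 1 0 0 0] by simp

lemma i_in_Zomega: "\<i> \<in> Zomega"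
  using Zomega_memI[of 0 0 1 0] by (simp add: omega_squared)

lemma omega_in_Zomega: "omega \<in> Zomega"
  using Zomega_memI[of 0 1 0 0] by simp

lemma Re_v2c_mult_c2v: "Re (v2c (G *v c2v z)) = G $ 1 $ 1 * Re z + G $ 1 $ 2 * Im z"
  and Im_v2c_mult_c2v: "Im (v2c (G *v c2v z)) = G $ 2 $ 1 * Re z + G $ 2 $ 2 * Im z"
  unfolding v2c_def c2v_def matrix_vector_mult_def by (simp_all add: UNIV_2)

lemma grid_operator_entries:
  fixes G :: "real ^ 2 ^ 2"
  assumes "grid_operator G"
  shows "\<exists>a b c d a' b' c' d' :: int.
        G $ 1 $ 1 = of_int a + of_int a' / sqrt 2 \<and>
        G $ 1 $ 2 = of_int b + of_int b' / sqrt 2 \<and>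
        G $ 2 $ 1 = of_int c + of_int c' / sqrt 2 \<and>
        G $ 2 $ 2 = of_int d + of_int d' / sqrt 2 \<and>
        [a + b + c + d = 0] (mod 2) \<and>
        [a' = b'] (mod 2) \<and> [b' = c'] (mod 2) \<and> [c' = d'] (mod 2)"
proof -
  have image: "v2c (G *v c2v z) \<in> Zomega" if "z \<in> Zomega" for z
    using assms that unfolding grid_operator_def by blast
  from image[OF one_in_Zomega] obtain a a' c c' :: int
    where G11: "G $ 1 $ 1 = of_int a + of_int a' / sqrt 2"
      and G21: "G $ 2 $ 1 = of_int c + of_int c' / sqrt 2" and "[a' = c'] (mod 2)"
    unfolding Zomega_iff Re_v2c_mult_c2v Im_v2c_mult_c2v by auto
  from image[OF i_in_Zomega] obtain b b' d d' :: int
    where G12: "G $ 1 $ 2 = of_int b + of_int b' / sqrt 2"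
      and G22: "G $ 2 $ 2 = of_int d + of_int d' / sqrt 2" and "[b' = d'] (mod 2)"
    unfolding Zomega_iff Re_v2c_mult_c2v Im_v2c_mult_c2v by auto
  have column_sum: "(of_int x + of_int x' / sqrt 2) / sqrt 2 + (of_int y + of_int y' / sqrt 2) / sqrt 2
      = of_int (x' + y') / 2 + of_int (x + y) / (sqrt 2 :: real)" for x x' y y' :: int
    by (simp add: divide_sqrt2 algebra_simps add_divide_distrib)
  from image[OF omega_in_Zomega] obtain p q r s :: int
    where "G $ 1 $ 1 / sqrt 2 + G $ 1 $ 2 / sqrt 2 = of_int p + of_int q / sqrt 2"
      and "G $ 2 $ 1 / sqrt 2 + G $ 2 $ 2 / sqrt 2 = of_int r + of_int s / sqrt 2"
      and "[q = s] (mod 2)"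
    unfolding Zomega_iff Re_v2c_mult_c2v Im_v2c_mult_c2v Re_omega Im_omega by auto
  then have "a' + b' = 2 * p \<and> a + b = q" "c' + d' = 2 * r \<and> c + d = s" "[q = s] (mod 2)"
    unfolding G11 G12 G21 G22 column_sum half_add_div_sqrt2_eq_iff .
  then have "even (a' + b')" "even (c' + d')" "a + b + c + d = q + s" "[q = s] (mod 2)"
    by auto
  with \<open>[a' = c'] (mod 2)\<close> \<open>[b' = d'] (mod 2)\<close>
  have "[a + b + c + d = 0] (mod 2) \<and> [a' = b'] (mod 2) \<and> [b' = c'] (mod 2) \<and> [c' = d'] (mod 2)"
    unfolding cong_iff_dvd_diff by auto
  with G11 G12 G21 G22 show ?thesis by blast
qed

lemma int_div_sqrt2_row_mult:
  fixes a a' b b' p q r s k :: int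
  assumes "a' * q + b' * s = 2 * k"
  shows "(of_int a + of_int a' / sqrt 2) * (of_int p + of_int q / sqrt 2)
       + (of_int b + of_int b' / sqrt 2) * (of_int r + of_int s / sqrt 2)
       = of_int (a * p + b * r + k) + of_int (a * q + a' * p + b * s + b' * r) / (sqrt 2 :: real)"
proof -
  have "real_of_int a' * of_int q + of_int b' * of_int s = 2 * of_int k"
    using assms by (metis of_int_add of_int_mult of_int_numeral)
  then show ?thesis
    by (simp add: divide_sqrt2 algebra_simps add_divide_distrib)
qed

lemma grid_operatorI:
  fixes G :: "real ^ 2 ^ 2" and a b c d a' b' c' d' :: int
  assumes G11: "G $ 1 $ 1 = of_int a + of_int a' / sqrt 2"
    and G12: "G $ 1 $ 2 = of_int b + of_int b' / sqrt 2"
    and G21: "G $ 2 $ 1 = of_int c + of_int c' / sqrt 2"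
    and G22: "G $ 2 $ 2 = of_int d + of_int d' / sqrt 2"
    and "[a + b + c + d = 0] (mod 2)" "[a' = b'] (mod 2)" "[b' = c'] (mod 2)" "[c' = d'] (mod 2)"
  shows "grid_operator G"
  unfolding grid_operator_def
proof
  fix z assume "z \<in> Zomega"
  then obtain p q r s :: int where Re_z: "Re z = of_int p + of_int q / sqrt 2"
    and Im_z: "Im z = of_int r + of_int s / sqrt 2" and "[q = s] (mod 2)"
    unfolding Zomega_iff by blast
  then have "even (a' * q + b' * s)" "even (c' * q + d' * s)"
    using assms(6-8) unfolding cong_iff_dvd_diff by auto
  then obtain k l where k: "a' * q + b' * s = 2 * k" and l: "c' * q + d' * s = 2 * l"
    by blast
  have "Re (v2c (G *v c2v z)) =
      of_int (a * p + b * r + k) + of_int (a * q + a' * p + b * s + b' * r) / sqrt 2"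
    unfolding Re_v2c_mult_c2v G11 G12 Re_z Im_z by (rule int_div_sqrt2_row_mult[OF k])
  moreover have "Im (v2c (G *v c2v z)) =
      of_int (c * p + d * r + l) + of_int (c * q + c' * p + d * s + d' * r) / sqrt 2"
    unfolding Im_v2c_mult_c2v G21 G22 Re_z Im_z by (rule int_div_sqrt2_row_mult[OF l])
  moreover have "[a * q + a' * p + b * s + b' * r = c * q + c' * p + d * s + d' * r] (mod 2)"
    using assms(5-8) \<open>[q = s] (mod 2)\<close> unfolding cong_iff_dvd_diff by auto
  ultimately show "v2c (G *v c2v z) \<in> Zomega"
    unfolding Zomega_iff by blast
qed

theorem lemma5p31:
  fixes G :: "real ^ 2 ^ 2"
  shows "grid_operator G \<longleftrightarrow>
    (\<exists>a b c d a' b' c' d' :: int.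
        G $ 1 $ 1 = of_int a + of_int a' / sqrt 2 \<and>
        G $ 1 $ 2 = of_int b + of_int b' / sqrt 2 \<and>
        G $ 2 $ 1 = of_int c + of_int c' / sqrt 2 \<and>
        G $ 2 $ 2 = of_int d + of_int d' / sqrt 2 \<and>
        [a + b + c + d = 0] (mod 2) \<and>
        [a' = b'] (mod 2) \<and> [b' = c'] (mod 2) \<and> [c' = d'] (mod 2))"
  (is "_ \<longleftrightarrow> ?entries")
proof
  assume "grid_operator G"
  then show ?entries by (rule grid_operator_entries)
next
  assume ?entries
  then show "grid_operator G" by (elim exE conjE) (rule grid_operatorI)
qed

end
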